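(* The generating function $G(z,x)$ is algebraic of degree $4$ and \[ G(z,x)=\frac{2\left(1-\sqrt{1-4xz^2}\right)}{\sqrt{1-4xz^2}\left(\sqrt{1-4z^2}+\sqrt{1-4xz^2}\right)^2}. \]
   Context: A bicolored Dyck path is a finite sequence of steps from $\{U_1,U_2,D\}$ ($U_1,U_2$ raise the height by $1$, $D$ lowers it by $1$) starting and ending at height $0$ and never going below height $0$; its length is its number of steps, and its up-steps are its $U_1$ and $U_2$ steps. For a bicolored Dyck path containing exactly one $U_2$ step, its weight is $p$, where the $U_2$ step is the $p$-th step of the path. Let $g_{n,m}$ be the total weight of bicolored Dyck paths of length $n$ with exactly one $U_2$ step such that this $U_2$ step is the $m$-th up-step of the path, and $G(z,x)=\sum_{n,m\ge 0}g_{n,m}z^nx^m$. *)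

theory Defs
  imports "HOL-Analysis.Analysis" "HOL-Computational_Algebra.Polynomial"
begin

datatype step = U1 | U2 | D

definition step_val :: "step \<Rightarrow> int" where
  "step_val s = (if s = D then -1 else 1)"

definition height :: "step list \<Rightarrow> int" where
  "height w = (\<Sum>s\<leftarrow>w. step_val s)"

definition is_dyck :: "step list \<Rightarrow> bool" where
  "is_dyck w \<longleftrightarrow> (\<forall>k\<le>length w. 0 \<le> height (take k w)) \<and> height w = 0"

definition num_up :: "step list \<Rightarrow> nat" where
  "num_up w = length (filter (\<lambda>s. s \<noteq> D) w)"

text \<open>Pairs (w, i): w a bicolored Dyck path of length n with exactly one U2 step,
  located at 0-based index i (so at position i+1), and it is the m-th up-step.\<close>
definition gpaths :: "nat \<Rightarrow> nat \<Rightarrow> (step list \<times> nat) set" where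
  "gpaths n m = {(w, i). length w = n \<and> is_dyck w \<and> length (filter (\<lambda>s. s = U2) w) = 1
      \<and> i < length w \<and> w ! i = U2 \<and> num_up (take (Suc i) w) = m}"

definition g :: "nat \<Rightarrow> nat \<Rightarrow> nat" where
  "g n m = (\<Sum>(w, i)\<in>gpaths n m. Suc i)"

definition Gclosed :: "real \<Rightarrow> real \<Rightarrow> real" where
  "Gclosed z x = 2 * (1 - sqrt (1 - 4*x*z^2)) /
     (sqrt (1 - 4*x*z^2) * (sqrt (1 - 4*z^2) + sqrt (1 - 4*x*z^2))^2)"

text \<open>Trivariate polynomials P(z,x,y) as nested univariate polynomials:
  outer variable y, coefficients polynomials in z, whose coefficients are polynomials in x.\<close>
definition eval3 :: "real poly poly poly \<Rightarrow> real \<Rightarrow> real \<Rightarrow> real \<Rightarrow> real" where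
  "eval3 P z x y = poly (map_poly (\<lambda>q. poly (map_poly (\<lambda>c. poly c x) q) z) P) y"

text \<open>f is algebraic of degree k over the rational functions in (z,x), as a function on U.\<close>
definition algebraic_of_degree :: "nat \<Rightarrow> (real \<Rightarrow> real \<Rightarrow> real) \<Rightarrow> (real \<times> real) set \<Rightarrow> bool" where
  "algebraic_of_degree k f U \<longleftrightarrow>
     (\<exists>P. P \<noteq> 0 \<and> degree P = k \<and> (\<forall>(z, x)\<in>U. eval3 P z x (f z x) = 0)) \<and>
     (\<forall>Q. Q \<noteq> 0 \<and> degree Q < k \<longrightarrow> \<not> (\<forall>(z, x)\<in>U. eval3 Q z x (f z x) = 0))"

end

theory Submission
  imports Defs "HOL-Complex_Analysis.Complex_Analysis"
begin

text \<open>A path counted by g n m whose U2 step has index i is A @ U2 # B, where A is a U1/D walk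
  from height 0 up to some height h and B is a U1/D walk from h + 1 down to 0, both staying
  nonnegative; it contributes (i + 1) z^n x^m with i = length A. Cutting descending walks at first
  passages expresses their generating functions through the Catalan-type series c = 1 + a c^2,
  for which 1 - 2 a c = sqrt (1 - 4 a); the factor i + 1 is carried by a companion series e with
  e (1 - 2 a c) = c, and the sum over h is the derivative of a geometric series.
  Isolating and squaring the two radicals of Gclosed gives a quartic relation. Conversely, with
  z = rsin u / 2 and 4 x z^2 = rsin v ^ 2 both radicals are rational in (u, v); analytic
  continuation along u \<mapsto> 1/u and v \<mapsto> 1/v shows that every polynomial relation also holds
  for the three conjugates with one or both radicals negated, and the four values are distinct.\<close>

lemma summable_on_comparison_real:
  fixes f :: "'a \<Rightarrow> real"
  assumes "q summable_on A" "\<And>x. x \<in> A \<Longrightarrow> \<bar>f x\<bar> \<le> q x"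
  shows "f summable_on A" "(\<lambda>x. \<bar>f x\<bar>) summable_on A"
proof -
  have "(\<lambda>x. norm (f x)) summable_on A"
    by (rule Infinite_Sum.abs_summable_on_comparison_test'[OF assms(1)]) (simp add: assms(2))
  then show "(\<lambda>x. \<bar>f x\<bar>) summable_on A"
    by simp
  then show "f summable_on A"
    using summable_on_iff_abs_summable_on_real by auto
qed

lemma has_sum_product:
  fixes f h :: "'a \<Rightarrow> real"
  assumes "(f has_sum a) A" "(h has_sum b) B"
    and "(\<lambda>x. \<bar>f x\<bar>) summable_on A" "(\<lambda>y. \<bar>h y\<bar>) summable_on B"
  shows "((\<lambda>(x, y). f x * h y) has_sum a * b) (A \<times> B)"
proof -
  have "(\<lambda>(x, y). \<bar>f x\<bar> * \<bar>h y\<bar>) summable_on A \<times> B"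
  proof (rule summable_on_SigmaI[where g = "\<lambda>x. \<bar>f x\<bar> * infsum (\<lambda>y. \<bar>h y\<bar>) B"])
    show "((\<lambda>y. case (x, y) of (x, y) \<Rightarrow> \<bar>f x\<bar> * \<bar>h y\<bar>) has_sum \<bar>f x\<bar> * infsum (\<lambda>y. \<bar>h y\<bar>) B) B" for x
      using has_sum_cmult_right[OF has_sum_infsum[OF assms(4)]] by simp
    show "(\<lambda>x. \<bar>f x\<bar> * infsum (\<lambda>y. \<bar>h y\<bar>) B) summable_on A"
      using summable_on_cmult_left[OF assms(3)] by simp
  qed auto
  then have summable: "(\<lambda>(x, y). f x * h y) summable_on A \<times> B"
    by (rule summable_on_comparison_real) (auto simp: abs_mult)
  then have "((\<lambda>(x, y). f x * h y) has_sum infsum (\<lambda>(x, y). f x * h y) (A \<times> B)) (A \<times> B)"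
    by (rule has_sum_infsum)
  then have "((\<lambda>x. f x * b) has_sum infsum (\<lambda>(x, y). f x * h y) (A \<times> B)) A"
    by (rule has_sum_Sigma') (use has_sum_cmult_right[OF assms(2)] in simp)
  moreover have "((\<lambda>x. f x * b) has_sum a * b) A"
    using has_sum_cmult_left[OF assms(1)] by simp
  ultimately have "infsum (\<lambda>(x, y). f x * h y) (A \<times> B) = a * b"
    using has_sum_unique by blast
  then show ?thesis
    using has_sum_infsum[OF summable] by simp
qed

lemma has_sum_geometric_deriv:
  fixes \<rho> :: real
  assumes "\<bar>\<rho>\<bar> < 1"
  shows "((\<lambda>n. real (Suc n) * \<rho> ^ n) has_sum 1 / (1 - \<rho>)^2) UNIV"
proof (rule norm_summable_imp_has_sum)
  show "summable (\<lambda>n. norm (real (Suc n) * \<rho> ^ n))"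
    using geometric_deriv_sums[of "\<bar>\<rho>\<bar>"] assms by (simp add: sums_summable abs_mult power_abs)
  show "(\<lambda>n. real (Suc n) * \<rho> ^ n) sums (1 / (1 - \<rho>)^2)"
    using geometric_deriv_sums[of \<rho>] assms by simp
qed

section \<open>Walks\<close>

text \<open>The start height a of \<open>walk lo a w b\<close> itself is not required to be at least lo.\<close>

fun walk :: "int \<Rightarrow> int \<Rightarrow> step list \<Rightarrow> int \<Rightarrow> bool" where
  "walk lo a [] b \<longleftrightarrow> a = b"
| "walk lo a (s # w) b \<longleftrightarrow> lo \<le> a + step_val s \<and> walk lo (a + step_val s) w b"

lemma step_val_simps [simp]: "step_val U1 = 1" "step_val U2 = 1" "step_val D = -1"
  by (simp_all add: step_val_def)

lemma height_Nil [simp]: "height [] = 0"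
  and height_Cons [simp]: "height (s # w) = step_val s + height w"
  by (simp_all add: height_def)

lemma walk_append: "walk lo a (u @ v) b \<longleftrightarrow> (\<exists>c. walk lo a u c \<and> walk lo c v b)"
  by (induction u arbitrary: a) auto

lemma walk_end: "walk lo a w b \<Longrightarrow> b = a + height w"
proof (induction w arbitrary: a)
  case (Cons s w)
  then have "b = (a + step_val s) + height w"
    by simp
  then show ?case
    by simp
qed simp

lemma walk_end_ge: "walk lo a w b \<Longrightarrow> lo \<le> b \<or> (w = [] \<and> a = b)"
  by (induction w arbitrary: a) auto

lemma walk_shift: "walk (lo + k) (a + k) w (b + k) \<longleftrightarrow> walk lo a w b"
proof (induction w arbitrary: a)
  case (Cons s w)
  then show ?case
    using Cons.IH[of "a + step_val s"] by (simp add: algebra_simps)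
qed simp

lemma walk_mono: "walk lo' a w b \<Longrightarrow> lo \<le> lo' \<Longrightarrow> walk lo a w b"
  by (induction w arbitrary: a) auto

lemma all_le_Suc_iff: "(\<forall>k\<le>Suc n. P k) \<longleftrightarrow> P 0 \<and> (\<forall>k\<le>n. P (Suc k))"
  using All_less_Suc2[of "Suc n" P] by (simp add: less_Suc_eq_le)

lemma walk_iff:
  "lo \<le> a \<Longrightarrow> walk lo a w b \<longleftrightarrow> (\<forall>k\<le>length w. lo \<le> a + height (take k w)) \<and> b = a + height w"
proof (induction w arbitrary: a)
  case (Cons s w)
  show ?case
  proof (cases "lo \<le> a + step_val s")
    case True
    then show ?thesis
      using Cons by (simp add: all_le_Suc_iff add.assoc)
  next
    case False
    then show ?thesis
      by (auto simp: all_le_Suc_iff)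
  qed
qed auto

lemma is_dyck_iff_walk: "is_dyck w \<longleftrightarrow> walk 0 0 w 0"
  using walk_iff[of 0 0 w 0] by (simp add: is_dyck_def)

lemma walk_first_passage:
  "walk lo (a + 1) w b \<Longrightarrow> b \<le> a \<Longrightarrow>
    \<exists>u v. w = u @ D # v \<and> walk (a + 1) (a + 1) u (a + 1) \<and> walk lo a v b"
proof (induction "length w" arbitrary: w a rule: less_induct)
  case less
  show ?case
  proof (cases w)
    case Nil
    then show ?thesis
      using less.prems by simp
  next
    case (Cons s w')
    show ?thesis
    proof (cases "s = D")
      case True
      then show ?thesis
        using less.prems Cons by (intro exI[of _ "[]"] exI[of _ w']) auto
    next
      case False
      then have s: "step_val s = 1"
        by (cases s) auto
      have "walk lo ((a + 1) + 1) w' b"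
        using less.prems Cons s by (simp add: add.assoc)
      then obtain u1 v1 where w': "w' = u1 @ D # v1" and u1: "walk (a + 1 + 1) (a + 1 + 1) u1 (a + 1 + 1)"
        and v1: "walk lo (a + 1) v1 b"
        using less.hyps[of w' "a + 1"] less.prems Cons by auto
      then obtain u2 v2 where v1': "v1 = u2 @ D # v2" and u2: "walk (a + 1) (a + 1) u2 (a + 1)"
        and v2: "walk lo a v2 b"
        using less.hyps[of v1 a] less.prems Cons by auto
      have "walk (a + 1) (a + 1 + 1) u1 (a + 1 + 1)"
        using walk_mono[OF u1] by simp
      moreover have "walk (a + 1) (a + 1 + 1) (D # u2) (a + 1)"
        using u2 by (simp add: add.commute)
      ultimately have "walk (a + 1) (a + 1) (s # u1 @ D # u2) (a + 1)"
        using s by (auto simp: walk_append)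
      then show ?thesis
        using Cons w' v1' v2 by (intro exI[of _ "s # u1 @ D # u2"] exI[of _ v2]) auto
    qed
  qed
qed

lemma walk_first_passage_unique:
  assumes eq: "u @ D # v = u' @ D # v'" and "walk lo lo u lo" "walk lo lo u' lo"
  shows "u = u' \<and> v = v'"
proof -
  have no_return: "\<not> walk lo lo (p @ D # r) c" if "walk lo lo p lo" for p r c
    using that walk_end[OF that] by (auto simp: walk_append dest: walk_end)
  obtain us where "u = u' @ us \<and> us @ D # v = D # v' \<or> u @ us = u' \<and> D # v = us @ D # v'"
    using eq by (auto simp: append_eq_append_conv2)
  then show ?thesis
    using no_return assms(2,3) by (cases us) auto
qed

fun mirror_step :: "step \<Rightarrow> step" where
  "mirror_step U1 = D"
| "mirror_step D = U1"
| "mirror_step U2 = U2"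

definition mirror :: "step list \<Rightarrow> step list" where
  "mirror w = rev (map mirror_step w)"

lemma mirror_step_mirror_step [simp]: "mirror_step (mirror_step s) = s"
  by (cases s) auto

lemma mirror_mirror [simp]: "mirror (mirror w) = w"
  by (simp add: mirror_def rev_map comp_def)

lemma mirror_Nil [simp]: "mirror [] = []"
  and mirror_Cons: "mirror (s # w) = mirror w @ [mirror_step s]"
  by (simp_all add: mirror_def)

lemma length_mirror [simp]: "length (mirror w) = length w"
  by (simp add: mirror_def)

lemma inj_mirror: "inj mirror"
  by (metis injI mirror_mirror)

lemma U2_in_mirror_iff [simp]: "U2 \<in> set (mirror w) \<longleftrightarrow> U2 \<in> set w"
proof -
  have "U2 = mirror_step s \<longleftrightarrow> s = U2" for s
    by (cases s) auto
  then show ?thesis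
    by (auto simp: mirror_def image_iff)
qed

lemma walk_mirror:
  "U2 \<notin> set w \<Longrightarrow> lo \<le> a \<Longrightarrow> lo \<le> b \<Longrightarrow> walk lo a w b \<longleftrightarrow> walk lo b (mirror w) a"
proof (induction w arbitrary: a)
  case (Cons s w)
  have s: "step_val (mirror_step s) = - step_val s"
    using Cons.prems by (cases s) auto
  have "walk lo a (s # w) b \<longleftrightarrow> lo \<le> a + step_val s \<and> walk lo b (mirror w) (a + step_val s)"
    using Cons by auto
  also have "\<dots> \<longleftrightarrow> walk lo b (mirror (s # w)) a"
    using Cons.prems s by (auto simp: mirror_Cons walk_append dest: walk_end_ge)
  finally show ?case .
qed auto

lemma count_U1_mirror [simp]: "count_list (mirror w) U1 = count_list w D"
  and count_D_mirror [simp]: "count_list (mirror w) D = count_list w U1"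
  by (induction w) (auto simp: mirror_Cons elim: mirror_step.elims)

lemma count_U1_add_count_D: "U2 \<notin> set w \<Longrightarrow> count_list w U1 + count_list w D = length w"
proof (induction w)
  case (Cons s w)
  then show ?case
    by (cases s) auto
qed simp

definition weight :: "real \<Rightarrow> real \<Rightarrow> step list \<Rightarrow> real" where
  "weight \<alpha> \<beta> w = \<alpha> ^ count_list w U1 * \<beta> ^ count_list w D"

lemma weight_simps [simp]:
  "weight \<alpha> \<beta> [] = 1"
  "weight \<alpha> \<beta> (U1 # w) = \<alpha> * weight \<alpha> \<beta> w"
  "weight \<alpha> \<beta> (D # w) = \<beta> * weight \<alpha> \<beta> w"
  "weight \<alpha> \<beta> (u @ v) = weight \<alpha> \<beta> u * weight \<alpha> \<beta> v"
  "weight \<alpha> \<beta> (mirror w) = weight \<beta> \<alpha> w"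
  by (simp_all add: weight_def power_add)

lemma abs_weight_le:
  assumes "\<bar>\<alpha>\<bar> \<le> 1/8" "\<bar>\<beta>\<bar> \<le> 1/8" "U2 \<notin> set w"
  shows "\<bar>weight \<alpha> \<beta> w\<bar> \<le> (1/8) ^ length w"
proof -
  have "\<bar>weight \<alpha> \<beta> w\<bar> = \<bar>\<alpha>\<bar> ^ count_list w U1 * \<bar>\<beta>\<bar> ^ count_list w D"
    by (simp add: weight_def abs_mult power_abs)
  also have "\<dots> \<le> (1/8) ^ count_list w U1 * (1/8) ^ count_list w D"
    using assms by (intro mult_mono power_mono) auto
  also have "\<dots> = (1/8) ^ length w"
    using count_U1_add_count_D[OF assms(3)] by (simp flip: power_add)
  finally show ?thesis .
qed

lemma Suc_le_two_power: "real (Suc n) \<le> 2 ^ n"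
proof -
  have "Suc n \<le> 2 ^ n"
    using less_exp[of n] by (simp add: Suc_le_eq)
  then have "real (Suc n) \<le> real (2 ^ n)"
    by (simp only: of_nat_le_iff)
  then show ?thesis
    by simp
qed

definition quarter_weight :: "step list \<Rightarrow> real" where
  "quarter_weight w = (1/4) ^ length w"

lemma length_weighted_le_quarter_weight:
  assumes "\<bar>c\<bar> \<le> (1/8) ^ length w"
  shows "\<bar>real (length w + 1) * c\<bar> \<le> quarter_weight w"
proof -
  have "\<bar>real (length w + 1) * c\<bar> \<le> 2 ^ length w * (1/8) ^ length w"
    using Suc_le_two_power[of "length w"] assms by (simp add: abs_mult mult_mono)
  also have "\<dots> = quarter_weight w"
    by (simp add: quarter_weight_def flip: power_mult_distrib)
  finally show ?thesis .
qed

lemma UNIV_step: "(UNIV :: step set) = {U1, U2, D}"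
  by (auto intro: step.exhaust)

lemma finite_UNIV_step: "finite (UNIV :: step set)"
  and card_UNIV_step: "card (UNIV :: step set) = 3"
  by (simp_all add: UNIV_step)

lemma finite_lists_length_le_step: "finite {w :: step list. length w \<le> n}"
  using finite_lists_length_le[OF finite_UNIV_step, of n] by simp

lemma sum_quarter_weight_length_le: "(\<Sum>w | length w \<le> n. quarter_weight w) = 4 - 4 * (3/4) ^ Suc n"
proof (induction n)
  case 0
  have "{w :: step list. length w \<le> 0} = {[]}"
    by auto
  then show ?case
    by (simp add: quarter_weight_def)
next
  case (Suc n)
  have card: "card {w :: step list. length w = Suc n} = 3 ^ Suc n"
    using card_lists_length_eq[OF finite_UNIV_step, of "Suc n"] by (simp add: card_UNIV_step)
  have split: "{w :: step list. length w \<le> Suc n} = {w. length w \<le> n} \<union> {w. length w = Suc n}"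
    by auto
  have "finite {w :: step list. length w = Suc n}"
    by (rule finite_subset[OF _ finite_lists_length_le_step[of "Suc n"]]) auto
  then have "(\<Sum>w | length w \<le> Suc n. quarter_weight w) =
      (\<Sum>w | length w \<le> n. quarter_weight w) + (\<Sum>w | length w = Suc n. quarter_weight w)"
    unfolding split by (intro sum.union_disjoint finite_lists_length_le_step) auto
  also have "(\<Sum>w | length w = Suc n. quarter_weight w) = (3/4) ^ Suc n"
    using card by (simp add: quarter_weight_def flip: power_mult_distrib)
  moreover have "(3/4 :: real) ^ Suc (Suc n) = 3/4 * (3/4) ^ Suc n"
    by simp
  ultimately show ?case
    using Suc by linarith
qed

lemma sum_quarter_weight_le: "finite F \<Longrightarrow> sum quarter_weight F \<le> 4"
proof -
  assume "finite F"
  define n where "n = Max (insert 0 (length ` F))"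
  have "F \<subseteq> {w. length w \<le> n}"
    using \<open>finite F\<close> by (auto simp: n_def)
  then have "sum quarter_weight F \<le> (\<Sum>w | length w \<le> n. quarter_weight w)"
    by (intro sum_mono2 finite_lists_length_le_step) (auto simp: quarter_weight_def)
  also have "\<dots> \<le> 4"
    by (simp add: sum_quarter_weight_length_le)
  finally show ?thesis .
qed

lemma quarter_weight_summable_on: "quarter_weight summable_on A"
proof -
  have "quarter_weight summable_on UNIV"
  proof (rule nonneg_bdd_above_summable_on)
    show "0 \<le> quarter_weight w" for w
      by (simp add: quarter_weight_def)
    show "bdd_above (sum quarter_weight ` {F. F \<subseteq> UNIV \<and> finite F})"
      using sum_quarter_weight_le by (intro bdd_aboveI2) blast
  qed
  then show ?thesis
    by (rule summable_on_subset) simp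
qed

lemma infsum_quarter_weight_le: "infsum quarter_weight A \<le> 4"
  by (rule infsum_le_finite_sums[OF quarter_weight_summable_on sum_quarter_weight_le])

section \<open>Generating functions of descending walks\<close>

definition down_walks :: "nat \<Rightarrow> step list set" where
  "down_walks h = {w. U2 \<notin> set w \<and> walk 0 (int h) w 0}"

lemma walk_shift_0: "walk (int h + 1) (int h + 1) u (int h + 1) \<longleftrightarrow> walk 0 0 u 0"
  using walk_shift[of 0 "int h + 1" 0 u 0] by simp

lemma down_walks_0: "down_walks 0 = insert [] ((#) U1 ` down_walks 1)"
proof (intro set_eqI iffI)
  fix w
  assume w: "w \<in> down_walks 0"
  show "w \<in> insert [] ((#) U1 ` down_walks 1)"
  proof (cases w)
    case (Cons s w')
    then have "s = U1"
      using w by (cases s) (auto simp: down_walks_def)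
    then show ?thesis
      using w Cons by (auto simp: down_walks_def)
  qed simp
qed (auto simp: down_walks_def)

lemma down_walks_Suc: "down_walks (Suc h) = (\<lambda>(u, v). u @ D # v) ` (down_walks 0 \<times> down_walks h)"
proof (intro set_eqI iffI)
  fix w
  assume w: "w \<in> down_walks (Suc h)"
  then have "walk 0 (int h + 1) w 0"
    by (simp add: down_walks_def add.commute)
  then obtain u v where "w = u @ D # v" "walk (int h + 1) (int h + 1) u (int h + 1)" "walk 0 (int h) v 0"
    using walk_first_passage[of 0 "int h" w 0] by auto
  then show "w \<in> (\<lambda>(u, v). u @ D # v) ` (down_walks 0 \<times> down_walks h)"
    using w by (auto simp: down_walks_def walk_shift_0 image_iff)
next
  fix w
  assume "w \<in> (\<lambda>(u, v). u @ D # v) ` (down_walks 0 \<times> down_walks h)"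
  then obtain u v where w: "w = u @ D # v" and u: "u \<in> down_walks 0" and v: "v \<in> down_walks h"
    by auto
  have "walk (int h + 1) (int h + 1) u (int h + 1)"
    using u by (simp add: down_walks_def walk_shift_0)
  then have "walk 0 (int h + 1) u (int h + 1)"
    by (rule walk_mono) simp
  moreover have "walk 0 (int h + 1) (D # v) 0"
    using v by (simp add: down_walks_def)
  ultimately have "walk 0 (int h + 1) w 0"
    unfolding w walk_append by blast
  then show "w \<in> down_walks (Suc h)"
    using u v w by (simp add: down_walks_def add.commute)
qed

lemma inj_on_down_walks_Suc: "inj_on (\<lambda>(u, v). u @ D # v) (down_walks 0 \<times> down_walks h)"
proof (rule inj_onI, clarify)
  fix u v u' v'
  assume "u \<in> down_walks 0" "u' \<in> down_walks 0" and eq: "u @ D # v = u' @ D # v'"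
  then have "walk (int h + 1) (int h + 1) u (int h + 1)" "walk (int h + 1) (int h + 1) u' (int h + 1)"
    by (auto simp: down_walks_def walk_shift_0)
  then show "u = u' \<and> v = v'"
    using walk_first_passage_unique[OF eq] by blast
qed

lemma has_sum_down_walks_0:
  fixes f F :: "step list \<Rightarrow> real"
  assumes "(f has_sum a) (down_walks 1)" and "\<And>v. v \<in> down_walks 1 \<Longrightarrow> F (U1 # v) = f v"
  shows "(F has_sum (F [] + a)) (down_walks 0)"
proof -
  have "((F \<circ> (#) U1) has_sum a) (down_walks 1)"
    using assms(1) by (rule has_sum_cong[THEN iffD1, rotated]) (simp add: assms(2))
  then have "(F has_sum a) ((#) U1 ` down_walks 1)"
    by (subst has_sum_reindex) auto
  then show ?thesis
    unfolding down_walks_0 by (intro has_sum_insert) auto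
qed

lemma has_sum_down_walks_Suc:
  fixes F :: "step list \<Rightarrow> real"
  assumes "(f has_sum a) (down_walks 0 \<times> down_walks h)"
    and "\<And>u v. u \<in> down_walks 0 \<Longrightarrow> v \<in> down_walks h \<Longrightarrow> F (u @ D # v) = f (u, v)"
  shows "(F has_sum a) (down_walks (Suc h))"
proof -
  have "((F \<circ> (\<lambda>(u, v). u @ D # v)) has_sum a) (down_walks 0 \<times> down_walks h)"
    using assms(1) by (rule has_sum_cong[THEN iffD1, rotated]) (auto simp: assms(2))
  then show ?thesis
    unfolding down_walks_Suc by (simp add: has_sum_reindex inj_on_down_walks_Suc)
qed

definition length_weight :: "real \<Rightarrow> real \<Rightarrow> step list \<Rightarrow> real" where
  "length_weight \<alpha> \<beta> w = real (length w + 1) * weight \<alpha> \<beta> w"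

definition down_gf :: "real \<Rightarrow> real \<Rightarrow> nat \<Rightarrow> real" where
  "down_gf \<alpha> \<beta> h = infsum (weight \<alpha> \<beta>) (down_walks h)"

definition down_gf_len :: "real \<Rightarrow> real \<Rightarrow> nat \<Rightarrow> real" where
  "down_gf_len \<alpha> \<beta> h = infsum (length_weight \<alpha> \<beta>) (down_walks h)"

lemma length_weight_mirror [simp]: "length_weight \<alpha> \<beta> (mirror w) = length_weight \<beta> \<alpha> w"
  by (simp add: length_weight_def)

context
  fixes \<alpha> \<beta> :: real
  assumes small: "\<bar>\<alpha>\<bar> \<le> 1/8" "\<bar>\<beta>\<bar> \<le> 1/8"
begin

lemma abs_length_weight_le: "U2 \<notin> set w \<Longrightarrow> \<bar>length_weight \<alpha> \<beta> w\<bar> \<le> quarter_weight w"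
  unfolding length_weight_def by (rule length_weighted_le_quarter_weight[OF abs_weight_le[OF small]])

lemma abs_weight_le_quarter_weight: "U2 \<notin> set w \<Longrightarrow> \<bar>weight \<alpha> \<beta> w\<bar> \<le> quarter_weight w"
  using abs_weight_le[OF small] power_mono[of "1/8" "1/4::real" "length w"]
  by (fastforce simp: quarter_weight_def)

lemma summable_on_weight:
  "weight \<alpha> \<beta> summable_on A" "(\<lambda>w. \<bar>weight \<alpha> \<beta> w\<bar>) summable_on A"
  if "\<And>w. w \<in> A \<Longrightarrow> U2 \<notin> set w"
  using summable_on_comparison_real[OF quarter_weight_summable_on] abs_weight_le_quarter_weight that
  by blast+

lemma summable_on_length_weight:
  "length_weight \<alpha> \<beta> summable_on A" "(\<lambda>w. \<bar>length_weight \<alpha> \<beta> w\<bar>) summable_on A"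
  if "\<And>w. w \<in> A \<Longrightarrow> U2 \<notin> set w"
  using summable_on_comparison_real[OF quarter_weight_summable_on] abs_length_weight_le that
  by blast+

lemma has_sum_down_gf: "(weight \<alpha> \<beta> has_sum down_gf \<alpha> \<beta> h) (down_walks h)"
  unfolding down_gf_def by (rule has_sum_infsum, rule summable_on_weight) (simp add: down_walks_def)

lemma has_sum_down_gf_len: "(length_weight \<alpha> \<beta> has_sum down_gf_len \<alpha> \<beta> h) (down_walks h)"
  unfolding down_gf_len_def by (rule has_sum_infsum, rule summable_on_length_weight) (simp add: down_walks_def)

lemma abs_summable_on_down_walks:
  "(\<lambda>w. \<bar>weight \<alpha> \<beta> w\<bar>) summable_on down_walks h" "(\<lambda>w. \<bar>length_weight \<alpha> \<beta> w\<bar>) summable_on down_walks h"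
  by (rule summable_on_weight summable_on_length_weight; simp add: down_walks_def)+

lemma down_gf_0: "down_gf \<alpha> \<beta> 0 = 1 + \<alpha> * down_gf \<alpha> \<beta> 1"
proof -
  have "(weight \<alpha> \<beta> has_sum (weight \<alpha> \<beta> [] + \<alpha> * down_gf \<alpha> \<beta> 1)) (down_walks 0)"
    by (rule has_sum_down_walks_0[OF has_sum_cmult_right[OF has_sum_down_gf]]) simp
  then show ?thesis
    using has_sum_unique[OF has_sum_down_gf[of 0]] by simp
qed

lemma down_gf_Suc: "down_gf \<alpha> \<beta> (Suc h) = \<beta> * down_gf \<alpha> \<beta> 0 * down_gf \<alpha> \<beta> h"
proof -
  have "((\<lambda>(u, v). weight \<alpha> \<beta> u * weight \<alpha> \<beta> v) has_sum down_gf \<alpha> \<beta> 0 * down_gf \<alpha> \<beta> h)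
      (down_walks 0 \<times> down_walks h)"
    by (rule has_sum_product[OF has_sum_down_gf has_sum_down_gf abs_summable_on_down_walks(1)
          abs_summable_on_down_walks(1)])
  then have "(weight \<alpha> \<beta> has_sum \<beta> * (down_gf \<alpha> \<beta> 0 * down_gf \<alpha> \<beta> h)) (down_walks (Suc h))"
    by (rule has_sum_down_walks_Suc[OF has_sum_cmult_right]) simp
  then show ?thesis
    using has_sum_unique[OF has_sum_down_gf[of "Suc h"]] by (simp add: mult.assoc)
qed

lemma down_gf_len_0: "down_gf_len \<alpha> \<beta> 0 = 1 + \<alpha> * (down_gf_len \<alpha> \<beta> 1 + down_gf \<alpha> \<beta> 1)"
proof -
  have "((\<lambda>v. \<alpha> * (length_weight \<alpha> \<beta> v + weight \<alpha> \<beta> v)) has_sum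
      \<alpha> * (down_gf_len \<alpha> \<beta> 1 + down_gf \<alpha> \<beta> 1)) (down_walks 1)"
    by (intro has_sum_cmult_right has_sum_add has_sum_down_gf_len has_sum_down_gf)
  then have "(length_weight \<alpha> \<beta> has_sum
      (length_weight \<alpha> \<beta> [] + \<alpha> * (down_gf_len \<alpha> \<beta> 1 + down_gf \<alpha> \<beta> 1))) (down_walks 0)"
    by (rule has_sum_down_walks_0) (simp add: length_weight_def algebra_simps)
  then show ?thesis
    using has_sum_unique[OF has_sum_down_gf_len[of 0]] by (simp add: length_weight_def)
qed

text \<open>The length weight is additive under concatenation because
  length (u @ D # v) + 1 = (length u + 1) + (length v + 1).\<close>

lemma down_gf_len_Suc:
  "down_gf_len \<alpha> \<beta> (Suc h) =
    \<beta> * (down_gf_len \<alpha> \<beta> 0 * down_gf \<alpha> \<beta> h + down_gf \<alpha> \<beta> 0 * down_gf_len \<alpha> \<beta> h)"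
proof -
  have "((\<lambda>(u, v). length_weight \<alpha> \<beta> u * weight \<alpha> \<beta> v) has_sum down_gf_len \<alpha> \<beta> 0 * down_gf \<alpha> \<beta> h)
      (down_walks 0 \<times> down_walks h)"
    by (rule has_sum_product[OF has_sum_down_gf_len has_sum_down_gf abs_summable_on_down_walks(2)
          abs_summable_on_down_walks(1)])
  moreover have "((\<lambda>(u, v). weight \<alpha> \<beta> u * length_weight \<alpha> \<beta> v) has_sum down_gf \<alpha> \<beta> 0 * down_gf_len \<alpha> \<beta> h)
      (down_walks 0 \<times> down_walks h)"
    by (rule has_sum_product[OF has_sum_down_gf has_sum_down_gf_len abs_summable_on_down_walks(1)
          abs_summable_on_down_walks(2)])
  ultimately have "((\<lambda>p. \<beta> * ((case p of (u, v) \<Rightarrow> length_weight \<alpha> \<beta> u * weight \<alpha> \<beta> v) +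
      (case p of (u, v) \<Rightarrow> weight \<alpha> \<beta> u * length_weight \<alpha> \<beta> v))) has_sum
      \<beta> * (down_gf_len \<alpha> \<beta> 0 * down_gf \<alpha> \<beta> h + down_gf \<alpha> \<beta> 0 * down_gf_len \<alpha> \<beta> h))
      (down_walks 0 \<times> down_walks h)"
    by (intro has_sum_cmult_right has_sum_add)
  then have "(length_weight \<alpha> \<beta> has_sum
      \<beta> * (down_gf_len \<alpha> \<beta> 0 * down_gf \<alpha> \<beta> h + down_gf \<alpha> \<beta> 0 * down_gf_len \<alpha> \<beta> h)) (down_walks (Suc h))"
    by (rule has_sum_down_walks_Suc) (simp add: length_weight_def algebra_simps)
  then show ?thesis
    using has_sum_unique[OF has_sum_down_gf_len[of "Suc h"]] by simp
qed

lemma down_gf_eq: "down_gf \<alpha> \<beta> h = \<beta> ^ h * down_gf \<alpha> \<beta> 0 ^ (h + 1)"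
  by (induction h) (simp_all add: down_gf_Suc mult_ac)

lemma down_gf_len_eq:
  "down_gf_len \<alpha> \<beta> h = real (h + 1) * \<beta> ^ h * down_gf \<alpha> \<beta> 0 ^ h * down_gf_len \<alpha> \<beta> 0"
proof (induction h)
  case (Suc h)
  then show ?case
    by (simp add: down_gf_len_Suc down_gf_eq[of h] algebra_simps)
qed simp

lemma down_gf_0_quadratic: "down_gf \<alpha> \<beta> 0 = 1 + \<alpha> * \<beta> * down_gf \<alpha> \<beta> 0 ^ 2"
  using down_gf_0 down_gf_Suc[of 0] by (simp add: power2_eq_square mult_ac)

lemma down_gf_len_0_eq: "down_gf_len \<alpha> \<beta> 0 * (1 - 2 * \<alpha> * \<beta> * down_gf \<alpha> \<beta> 0) = down_gf \<alpha> \<beta> 0"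
proof -
  have "down_gf \<alpha> \<beta> 1 = \<beta> * down_gf \<alpha> \<beta> 0 * down_gf \<alpha> \<beta> 0"
    "down_gf_len \<alpha> \<beta> 1 = \<beta> * (down_gf_len \<alpha> \<beta> 0 * down_gf \<alpha> \<beta> 0 + down_gf \<alpha> \<beta> 0 * down_gf_len \<alpha> \<beta> 0)"
    using down_gf_Suc[of 0] down_gf_len_Suc[of 0] by simp_all
  then show ?thesis
    using down_gf_0 down_gf_len_0 by algebra
qed

lemma abs_down_gf_le: "\<bar>down_gf \<alpha> \<beta> h\<bar> \<le> 4"
proof -
  have "\<bar>down_gf \<alpha> \<beta> h\<bar> \<le> infsum (\<lambda>w. \<bar>weight \<alpha> \<beta> w\<bar>) (down_walks h)"
    using norm_infsum_bound[of "weight \<alpha> \<beta>" "down_walks h"] abs_summable_on_down_walks(1)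
    by (simp add: down_gf_def)
  also have "\<dots> \<le> infsum quarter_weight (down_walks h)"
    using abs_summable_on_down_walks(1) quarter_weight_summable_on abs_weight_le_quarter_weight
    by (intro infsum_mono) (auto simp: down_walks_def)
  also have "\<dots> \<le> 4"
    by (rule infsum_quarter_weight_le)
  finally show ?thesis .
qed

lemma down_gf_0_sqrt: "1 - 2 * \<alpha> * \<beta> * down_gf \<alpha> \<beta> 0 = sqrt (1 - 4 * \<alpha> * \<beta>)"
proof -
  define c where "c = down_gf \<alpha> \<beta> 0"
  have "\<bar>\<alpha>\<bar> * \<bar>\<beta>\<bar> * \<bar>c\<bar> \<le> (1/8 * (1/8)) * 4"
    using small abs_down_gf_le[of 0] by (intro mult_mono) (auto simp: c_def)
  then have "\<bar>2 * \<alpha> * \<beta> * c\<bar> \<le> 1/8"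
    by (simp add: abs_mult)
  then have "0 \<le> 1 - 2 * \<alpha> * \<beta> * c"
    by (simp add: abs_le_iff)
  moreover have "(1 - 2 * \<alpha> * \<beta> * c)^2 = 1 - 4 * \<alpha> * \<beta>"
    using down_gf_0_quadratic unfolding c_def[symmetric] by algebra
  ultimately show ?thesis
    by (simp add: real_sqrt_unique c_def)
qed

end

section \<open>Splitting a path at its U2 step\<close>

definition up_walks :: "nat \<Rightarrow> step list set" where
  "up_walks h = mirror ` down_walks h"

lemma up_walks_iff: "A \<in> up_walks h \<longleftrightarrow> U2 \<notin> set A \<and> walk 0 0 A (int h)"
proof -
  have "A \<in> up_walks h \<longleftrightarrow> mirror A \<in> down_walks h"
    unfolding up_walks_def by (metis image_iff mirror_mirror)
  also have "\<dots> \<longleftrightarrow> U2 \<notin> set A \<and> walk 0 0 A (int h)"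
    using walk_mirror[of A 0 0 "int h"] by (auto simp: down_walks_def)
  finally show ?thesis .
qed

definition splittings :: "(nat \<times> step list \<times> step list) set" where
  "splittings = Sigma UNIV (\<lambda>h. up_walks h \<times> down_walks (Suc h))"

definition join_at_U2 :: "nat \<times> step list \<times> step list \<Rightarrow> (nat \<times> nat) \<times> step list \<times> nat" where
  "join_at_U2 = (\<lambda>(h, A, B). ((length A + 1 + length B, count_list A U1 + 1), A @ U2 # B, length A))"

lemma num_up_eq_count: "num_up w = count_list w U1 + count_list w U2"
proof (induction w)
  case (Cons s w)
  then show ?case
    by (cases s) (auto simp: num_up_def)
qed (simp add: num_up_def)

lemma splittings_iff:
  "(h, A, B) \<in> splittings \<longleftrightarrow>
    U2 \<notin> set A \<and> U2 \<notin> set B \<and> walk 0 0 A (int h) \<and> walk 0 (int h + 1) B 0"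
  by (auto simp: splittings_def up_walks_iff down_walks_def add.commute)

lemma inj_on_join_at_U2_word: "inj_on (\<lambda>(h, A, B). A @ U2 # B) splittings"
proof (rule inj_onI)
  fix p p'
  assume "p \<in> splittings" "p' \<in> splittings" and eq: "(\<lambda>(h, A, B). A @ U2 # B) p = (\<lambda>(h, A, B). A @ U2 # B) p'"
  moreover obtain h A B h' A' B' where p: "p = (h, A, B)" and p': "p' = (h', A', B')"
    by (cases p, cases p') auto
  ultimately have "A = A'" "B = B'" and walks: "walk 0 0 A (int h)" "walk 0 0 A' (int h')"
    using append_Cons_eq_iff[of U2 A B A' B'] by (auto simp: splittings_iff)
  then have "h = h'"
    using walk_end[OF walks(1)] walk_end[OF walks(2)] by simp
  then show "p = p'"
    using \<open>A = A'\<close> \<open>B = B'\<close> p p' by simp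
qed

lemma join_at_U2_in_gpaths:
  assumes "(h, A, B) \<in> splittings"
  shows "join_at_U2 (h, A, B) \<in> (SIGMA (n, m):UNIV. gpaths n m)"
proof -
  have A: "U2 \<notin> set A" "walk 0 0 A (int h)" and B: "U2 \<notin> set B" "walk 0 (int h + 1) B 0"
    using assms by (auto simp: splittings_iff)
  then have "is_dyck (A @ U2 # B)"
    by (auto simp: is_dyck_iff_walk walk_append)
  moreover have "length (filter (\<lambda>s. s = U2) (A @ U2 # B)) = 1"
    using A(1) B(1) by (auto simp: filter_empty_conv)
  ultimately show ?thesis
    using A(1) by (simp add: join_at_U2_def gpaths_def num_up_eq_count)
qed

lemma gpaths_split_at_U2:
  assumes "(w, i) \<in> gpaths n m"
  shows "((n, m), w, i) \<in> join_at_U2 ` splittings"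
proof -
  have len: "length w = n" and dyck: "is_dyck w" and one: "length (filter (\<lambda>s. s = U2) w) = 1"
    and i: "i < length w" "w ! i = U2" and m: "num_up (take (Suc i) w) = m"
    using assms by (auto simp: gpaths_def)
  define A B where "A = take i w" and "B = drop (Suc i) w"
  have w: "w = A @ U2 # B"
    using i unfolding A_def B_def by (metis id_take_nth_drop)
  then have "filter (\<lambda>s. s = U2) A = []" "filter (\<lambda>s. s = U2) B = []"
    using one by auto
  then have A: "U2 \<notin> set A" and B: "U2 \<notin> set B"
    by (auto simp: filter_empty_conv)
  obtain c where c: "walk 0 0 A c" "walk 0 c (U2 # B) 0"
    using dyck w by (auto simp: is_dyck_iff_walk walk_append)
  then have "0 \<le> c"
    using walk_end_ge by fastforce
  then have "(nat c, A, B) \<in> splittings"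
    using A B c by (simp add: splittings_iff)
  moreover have "length A = i"
    using i by (simp add: A_def)
  then have "join_at_U2 (nat c, A, B) = ((n, m), w, i)"
    using w len m A by (auto simp: join_at_U2_def num_up_eq_count)
  ultimately show ?thesis
    by (metis image_eqI)
qed

lemma bij_betw_join_at_U2: "bij_betw join_at_U2 splittings (SIGMA (n, m):UNIV. gpaths n m)"
proof (rule bij_betw_imageI)
  have "(\<lambda>(_, w, _). w) \<circ> join_at_U2 = (\<lambda>(h, A, B). A @ U2 # B)"
    by (auto simp: join_at_U2_def)
  then show "inj_on join_at_U2 splittings"
    using inj_on_join_at_U2_word inj_on_imageI2 by metis
  show "join_at_U2 ` splittings = (SIGMA (n, m):UNIV. gpaths n m)"
    using join_at_U2_in_gpaths gpaths_split_at_U2 by fastforce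
qed

definition Gform :: "'a::field \<Rightarrow> 'a \<Rightarrow> 'a" where
  "Gform s t = 2 * (1 - t) / (t * (s + t)^2)"

lemma Gclosed_eq_Gform: "Gclosed z x = Gform (sqrt (1 - 4*z^2)) (sqrt (1 - 4*x*z^2))"
  by (simp add: Gclosed_def Gform_def)

lemma Gform_eq_series:
  fixes a q c c' e :: real
  assumes c: "c = 1 + a * c^2" and c': "c' = 1 + q * c'^2" and e: "e * (1 - 2 * q * c') = c'"
    and "1 - 2 * q * c' \<noteq> 0" "q * c' * c \<noteq> 1"
  shows "q * e * c^2 / (1 - q * c' * c)^2 = Gform (1 - 2 * a * c) (1 - 2 * q * c')"
proof -
  define s t where "s = 1 - 2 * a * c" and "t = 1 - 2 * q * c'"
  have "c \<noteq> 0"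
    using c by auto
  have st: "c * (s + t) = 2 * (1 - q * c' * c)"
    using c c' by (simp add: s_def t_def) algebra
  then have "s + t \<noteq> 0"
    using assms(5) by auto
  have "c^2 * (q * e * c^2 * (t * (s + t)^2)) = c^2 * (2 * (1 - t) * (1 - q * c' * c)^2)"
  proof -
    have "c^2 * (q * e * c^2 * (t * (s + t)^2)) = q * (e * t) * c^2 * (c * (s + t))^2"
      by (simp add: power2_eq_square algebra_simps)
    also have "\<dots> = q * c' * c^2 * (2 * (1 - q * c' * c))^2"
      using e st by (simp add: t_def)
    also have "\<dots> = c^2 * (2 * (1 - t) * (1 - q * c' * c)^2)"
      unfolding t_def by algebra
    finally show ?thesis .
  qed
  then have "q * e * c^2 * (t * (s + t)^2) = 2 * (1 - t) * (1 - q * c' * c)^2"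
    using \<open>c \<noteq> 0\<close> by simp
  then show ?thesis
    using assms(4,5) \<open>s + t \<noteq> 0\<close> by (simp add: Gform_def s_def[symmetric] t_def[symmetric] frac_eq_eq)
qed

definition marked_term :: "real \<Rightarrow> real \<Rightarrow> (nat \<times> nat) \<times> step list \<times> nat \<Rightarrow> real" where
  "marked_term z x = (\<lambda>((n, m), w, i). real (Suc i) * z ^ n * x ^ m)"

context
  fixes z x :: real
  assumes small: "\<bar>z\<bar> < 1/8" "\<bar>x\<bar> < 1/8"
begin

lemma small_z: "\<bar>z\<bar> \<le> 1/8" and small_xz: "\<bar>x * z\<bar> \<le> 1/8"
proof -
  show "\<bar>z\<bar> \<le> 1/8"
    using small by simp
  have "\<bar>x\<bar> * \<bar>z\<bar> \<le> 1 * (1/8)"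
    using small by (intro mult_mono) auto
  then show "\<bar>x * z\<bar> \<le> 1/8"
    by (simp add: abs_mult)
qed

lemma marked_term_join_at_U2:
  assumes "(h, A, B) \<in> splittings"
  shows "marked_term z x (join_at_U2 (h, A, B)) = x * z * (length_weight (x * z) z A * weight z z B)"
proof -
  have "length A = count_list A U1 + count_list A D" "length B = count_list B U1 + count_list B D"
    using assms count_U1_add_count_D by (auto simp: splittings_iff)
  then show ?thesis
    by (simp add: marked_term_def join_at_U2_def length_weight_def weight_def power_add
        power_mult_distrib algebra_simps)
qed

lemma abs_marked_term_join_at_U2_le:
  "\<bar>marked_term z x (join_at_U2 (h, A, B))\<bar> \<le> quarter_weight (A @ U2 # B)"
proof -
  define w c where "w = A @ U2 # B" and "c = z ^ length w * x ^ (count_list A U1 + 1)"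
  have "\<bar>z\<bar> ^ length w \<le> (1/8) ^ length w"
    using small by (intro power_mono) auto
  moreover have "\<bar>x\<bar> ^ (count_list A U1 + 1) \<le> 1"
    using small by (intro power_le_one) auto
  ultimately have "\<bar>c\<bar> \<le> (1/8) ^ length w * 1"
    unfolding c_def abs_mult power_abs by (intro mult_mono) auto
  then have "\<bar>real (length w + 1) * c\<bar> \<le> quarter_weight w"
    by (intro length_weighted_le_quarter_weight) simp
  moreover have "\<bar>real (length A + 1) * c\<bar> \<le> \<bar>real (length w + 1) * c\<bar>"
    by (simp add: abs_mult mult_right_mono w_def)
  moreover have "marked_term z x (join_at_U2 (h, A, B)) = real (length A + 1) * c"
    by (simp add: marked_term_def join_at_U2_def w_def c_def)
  ultimately show ?thesis
    by (simp add: w_def)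
qed

lemma summable_on_marked_term: "(marked_term z x \<circ> join_at_U2) summable_on splittings"
proof (rule summable_on_comparison_real)
  have "quarter_weight summable_on (\<lambda>(h, A, B). A @ U2 # B) ` splittings"
    by (rule quarter_weight_summable_on)
  then show "(quarter_weight \<circ> (\<lambda>(h, A, B). A @ U2 # B)) summable_on splittings"
    by (simp add: summable_on_reindex inj_on_join_at_U2_word)
qed (auto simp: abs_marked_term_join_at_U2_le)

lemma has_sum_marked_term_height:
  "((\<lambda>p. (marked_term z x \<circ> join_at_U2) (h, p)) has_sum
     x * z * (down_gf_len z (x * z) h * down_gf z z (Suc h))) (up_walks h \<times> down_walks (Suc h))"
proof -
  have "(length_weight (x * z) z has_sum down_gf_len z (x * z) h) (up_walks h)"
    using has_sum_down_gf_len[OF small_z small_xz, of h] inj_mirror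
    by (simp add: up_walks_def has_sum_reindex inj_on_subset comp_def)
  moreover have "(\<lambda>A. \<bar>length_weight (x * z) z A\<bar>) summable_on up_walks h"
    by (rule summable_on_length_weight(2)[OF small_xz small_z]) (simp add: up_walks_iff)
  ultimately have "((\<lambda>(A, B). length_weight (x * z) z A * weight z z B) has_sum
      down_gf_len z (x * z) h * down_gf z z (Suc h)) (up_walks h \<times> down_walks (Suc h))"
    using has_sum_product has_sum_down_gf[OF small_z small_z]
      abs_summable_on_down_walks(1)[OF small_z small_z] by blast
  then have "((\<lambda>p. x * z * (case p of (A, B) \<Rightarrow> length_weight (x * z) z A * weight z z B)) has_sum
      x * z * (down_gf_len z (x * z) h * down_gf z z (Suc h))) (up_walks h \<times> down_walks (Suc h))"
    by (rule has_sum_cmult_right)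
  then show ?thesis
    by (rule has_sum_cong[THEN iffD1, rotated]) (auto simp: marked_term_join_at_U2 splittings_def)
qed

lemma has_sum_heights:
  "((\<lambda>h. x * z * (down_gf_len z (x * z) h * down_gf z z (Suc h))) has_sum Gclosed z x) UNIV"
proof -
  define c c' e where "c = down_gf z z 0" and "c' = down_gf z (x * z) 0" and "e = down_gf_len z (x * z) 0"
  define q where "q = z * (x * z)"
  have "x * z * (down_gf_len z (x * z) h * down_gf z z (Suc h)) =
      q * e * c^2 * (real (Suc h) * (q * c' * c) ^ h)" for h
    using down_gf_len_eq[OF small_z small_xz, of h] down_gf_eq[OF small_z small_z, of "Suc h"]
    by (simp add: q_def c_def c'_def e_def power_mult_distrib power2_eq_square algebra_simps)
  moreover have "\<bar>q * c' * c\<bar> \<le> (1/8 * (1/8)) * 4 * 4"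
    unfolding q_def c_def c'_def abs_mult
    using small_z small_xz abs_down_gf_le[OF small_z small_xz] abs_down_gf_le[OF small_z small_z]
    by (intro mult_mono) auto
  then have "\<bar>q * c' * c\<bar> < 1"
    by simp
  ultimately have sum: "((\<lambda>h. x * z * (down_gf_len z (x * z) h * down_gf z z (Suc h))) has_sum
      q * e * c^2 * (1 / (1 - q * c' * c)^2)) UNIV"
    using has_sum_cmult_right[OF has_sum_geometric_deriv] by presburger
  have "\<bar>4 * q\<bar> \<le> 4 * ((1/8) * (1/8))"
    unfolding q_def abs_mult using small_z small_xz by (intro mult_mono) auto
  then have "0 < 1 - 4 * x * z^2"
    by (simp add: q_def power2_eq_square algebra_simps abs_le_iff)
  moreover have "1 - 2 * q * c' = sqrt (1 - 4 * x * z^2)"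
    using down_gf_0_sqrt[OF small_z small_xz] by (simp add: q_def c'_def power2_eq_square algebra_simps)
  moreover have "1 - 2 * (z * z) * c = sqrt (1 - 4 * z^2)"
    using down_gf_0_sqrt[OF small_z small_z] by (simp add: c_def power2_eq_square algebra_simps)
  ultimately have "q * e * c^2 / (1 - q * c' * c)^2 = Gclosed z x"
    using Gform_eq_series[of c "z * z" c' q e] \<open>\<bar>q * c' * c\<bar> < 1\<close>
      down_gf_0_quadratic[OF small_z small_z] down_gf_0_quadratic[OF small_z small_xz]
      down_gf_len_0_eq[OF small_z small_xz]
    by (simp add: Gclosed_eq_Gform c_def c'_def e_def q_def mult.assoc)
  then show ?thesis
    using sum by simp
qed

lemma has_sum_marked_term: "((marked_term z x \<circ> join_at_U2) has_sum Gclosed z x) splittings"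
  unfolding splittings_def
  by (rule has_sum_SigmaI[OF has_sum_marked_term_height has_sum_heights
        summable_on_marked_term[unfolded splittings_def]])

lemma finite_gpaths: "finite (gpaths n m)"
proof (rule finite_subset)
  show "gpaths n m \<subseteq> {w. length w \<le> n} \<times> {..<n}"
    by (auto simp: gpaths_def)
  show "finite ({w :: step list. length w \<le> n} \<times> {..<n})"
    using finite_lists_length_le_step by simp
qed

lemma has_sum_g: "((\<lambda>(n, m). real (g n m) * z ^ n * x ^ m) has_sum Gclosed z x) UNIV"
proof (rule has_sum_Sigma')
  show "(marked_term z x has_sum Gclosed z x) (SIGMA (n, m):UNIV. gpaths n m)"
    using has_sum_marked_term has_sum_reindex_bij_betw[OF bij_betw_join_at_U2, of "marked_term z x"]
    by (simp add: comp_def)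
  fix nm :: "nat \<times> nat"
  obtain n m where nm: "nm = (n, m)"
    by fastforce
  have "(\<Sum>p\<in>gpaths n m. marked_term z x ((n, m), p)) = real (g n m) * z ^ n * x ^ m"
    by (simp add: marked_term_def g_def sum_distrib_right case_prod_beta)
  then show "((\<lambda>p. marked_term z x (nm, p)) has_sum (case nm of (n, m) \<Rightarrow> real (g n m) * z ^ n * x ^ m))
      (case nm of (n, m) \<Rightarrow> gpaths n m)"
    using finite_gpaths by (simp add: nm has_sum_finiteI)
qed

end

section \<open>A quartic relation\<close>

lemma map_poly_add_hom:
  assumes "\<And>a b. f (a + b) = f a + f b" "f 0 = 0"
  shows "map_poly f (p + q) = map_poly f p + map_poly f q"
  by (intro poly_eqI) (simp add: coeff_map_poly assms)

lemma map_poly_mult_hom: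
  assumes add: "\<And>a b. f (a + b) = f a + f b" and zero: "f 0 = 0" and mult: "\<And>a b. f (a * b) = f a * f b"
  shows "map_poly f (p * q) = map_poly f p * map_poly f q"
proof (induction p)
  case (pCons a p)
  have "map_poly f (pCons a p * q) = map_poly f (smult a q) + map_poly f (pCons 0 (p * q))"
    by (simp add: map_poly_add_hom[of f, OF add zero])
  also have "\<dots> = smult (f a) (map_poly f q) + pCons 0 (map_poly f p * map_poly f q)"
    using pCons.IH by (simp add: map_poly_smult[of f, OF zero mult] map_poly_pCons[of f, OF zero] zero)
  also have "\<dots> = map_poly f (pCons a p) * map_poly f q"
    by (simp add: map_poly_pCons[of f, OF zero])
  finally show ?case .
qed simp

definition eval2 :: "real poly poly \<Rightarrow> real \<Rightarrow> real \<Rightarrow> real" where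
  "eval2 q z x = poly (map_poly (\<lambda>c. poly c x) q) z"

lemma eval2_add [simp]: "eval2 (p + q) z x = eval2 p z x + eval2 q z x"
  unfolding eval2_def by (subst map_poly_add_hom) auto

lemma eval2_mult [simp]: "eval2 (p * q) z x = eval2 p z x * eval2 q z x"
  unfolding eval2_def by (subst map_poly_mult_hom) auto

lemma eval2_0 [simp]: "eval2 0 z x = 0"
  and eval2_1 [simp]: "eval2 1 z x = 1"
  and eval2_numeral [simp]: "eval2 (numeral n) z x = numeral n"
  by (simp_all add: eval2_def numeral_poly map_poly_pCons)

lemma eval2_uminus [simp]: "eval2 (- p) z x = - eval2 p z x"
  using eval2_add[of "- p" p z x] by simp

lemma eval2_diff [simp]: "eval2 (p - q) z x = eval2 p z x - eval2 q z x"
  using eval2_add[of p "- q" z x] by simp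

lemma eval2_power [simp]: "eval2 (p ^ k) z x = eval2 p z x ^ k"
  by (induction k) auto

definition var_z :: "real poly poly" where "var_z = [:0, 1:]"

definition var_x :: "real poly poly" where "var_x = [:[:0, 1:]:]"

lemma eval2_var_z [simp]: "eval2 var_z z x = z"
  by (simp add: eval2_def var_z_def map_poly_pCons)

lemma eval2_var_x [simp]: "eval2 var_x z x = x"
  by (simp add: eval2_def var_x_def map_poly_pCons)

lemma eval3_pCons [simp]: "eval3 (pCons a P) z x y = eval2 a z x + y * eval3 P z x y"
  unfolding eval3_def eval2_def by (subst map_poly_pCons) auto

lemma eval3_0 [simp]: "eval3 0 z x y = 0"
  by (simp add: eval3_def)

lemma eval3_eq_poly: "eval3 P z x y = poly (map_poly (\<lambda>q. eval2 q z x) P) y"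
  by (simp add: eval3_def eval2_def)

lemma eval2_eq_0_on_product:
  assumes "infinite A" "infinite B" and zero: "\<And>z x. z \<in> A \<Longrightarrow> x \<in> B \<Longrightarrow> eval2 q z x = 0"
  shows "q = 0"
proof -
  have "map_poly (\<lambda>c. poly c x) q = 0" if "x \<in> B" for x
  proof (rule ccontr)
    assume "map_poly (\<lambda>c. poly c x) q \<noteq> 0"
    moreover have "A \<subseteq> {z. poly (map_poly (\<lambda>c. poly c x) q) z = 0}"
      using zero[OF _ that] by (auto simp: eval2_def)
    ultimately show False
      using poly_roots_finite assms(1) finite_subset by blast
  qed
  then have coeff_zero: "poly (coeff q i) x = 0" if "x \<in> B" for i x
    using that coeff_map_poly[of "\<lambda>c. poly c x" q i] by simp
  have "coeff q i = 0" for i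
  proof (rule ccontr)
    assume "coeff q i \<noteq> 0"
    moreover have "B \<subseteq> {x. poly (coeff q i) x = 0}"
      using coeff_zero by blast
    ultimately show False
      using poly_roots_finite assms(2) finite_subset by blast
  qed
  then show ?thesis
    by (simp add: poly_eq_iff)
qed

text \<open>Isolating the radical t in y = Gform s t and squaring, then isolating s and squaring again,
  where s^2 = 1 - 4z^2 and t^2 = 1 - 4xz^2.\<close>

definition minpoly_G :: "real poly poly poly" where
  "minpoly_G =
    (let S = 1 - 4 * var_z^2; T = 1 - 4 * var_x * var_z^2;
         a = 4 - 4 * T; b = - 4 * T * (S + T); c = 4 * T^2 * S - T * (S + T)^2
     in [: a^2, 2 * a * b, b^2 + 2 * a * c - 64 * T^2 * S, 2 * b * c, c^2 :])"

lemma eval3_minpoly_G: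
  fixes z x y :: real
  defines "S \<equiv> 1 - 4 * z^2" and "T \<equiv> 1 - 4 * x * z^2"
  shows "eval3 minpoly_G z x y =
    ((4 - 4 * T) - 4 * T * (S + T) * y + (4 * T^2 * S - T * (S + T)^2) * y^2)^2 - 64 * y^2 * T^2 * S"
  unfolding minpoly_G_def S_def T_def Let_def by (simp add: power2_eq_square algebra_simps)

lemma degree_minpoly_G: "degree minpoly_G = 4"
proof -
  define c :: "real poly poly" where "c = 4 * (1 - 4 * var_x * var_z^2)^2 * (1 - 4 * var_z^2) -
      (1 - 4 * var_x * var_z^2) * ((1 - 4 * var_z^2) + (1 - 4 * var_x * var_z^2))^2"
  have "eval2 c (1/2) 0 \<noteq> 0"
    by (simp add: c_def power2_eq_square)
  then have "c^2 \<noteq> 0"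
    by auto
  then show ?thesis
    unfolding minpoly_G_def Let_def c_def[symmetric] by simp
qed

lemma minpoly_G_root:
  assumes "4 * z^2 < 1" "4 * x * z^2 < 1"
  shows "eval3 minpoly_G z x (Gform (sqrt (1 - 4*z^2)) (sqrt (1 - 4*x*z^2))) = 0"
proof -
  define S T where "S = 1 - 4 * z^2" and "T = 1 - 4 * x * z^2"
  define s t where "s = sqrt S" and "t = sqrt T"
  have s2: "s^2 = S" and t2: "t^2 = T" and "s > 0" "t > 0"
    using assms by (auto simp: s_def t_def S_def T_def)
  define y where "y = Gform s t"
  then have "y * t * (s + t)^2 = 2 * (1 - t)"
    using \<open>s > 0\<close> \<open>t > 0\<close> by (simp add: Gform_def field_simps)
  then have "t * (y * (S + T) + 2) = 2 - 2 * y * T * s"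
    using s2 t2 by algebra
  then have "T * (y * (S + T) + 2)^2 = (2 - 2 * y * T * s)^2"
    using t2 by algebra
  then have "(4 - 4 * T) - 4 * T * (S + T) * y + (4 * T^2 * S - T * (S + T)^2) * y^2 = 8 * y * T * s"
    using s2 by algebra
  then have "((4 - 4 * T) - 4 * T * (S + T) * y + (4 * T^2 * S - T * (S + T)^2) * y^2)^2
      - 64 * y^2 * T^2 * S = 0"
    using s2 by algebra
  then show ?thesis
    by (simp add: eval3_minpoly_G y_def s_def t_def S_def T_def)
qed

section \<open>No relation of lower degree\<close>

lemma of_real_poly_map_poly:
  assumes "f 0 = 0"
  shows "of_real (poly (map_poly f p) t) =
    poly (map_poly (\<lambda>c. of_real (f c)) p) (of_real t :: 'a::real_field)"
  by (induction p) (simp_all add: map_poly_pCons assms)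

definition eval3_complex :: "real poly poly poly \<Rightarrow> complex \<Rightarrow> complex \<Rightarrow> complex \<Rightarrow> complex" where
  "eval3_complex P z x y =
    poly (map_poly (\<lambda>q. poly (map_poly (\<lambda>c. poly (map_poly of_real c) x) q) z) P) y"

lemma eval3_complex_of_real:
  "eval3_complex P (of_real z) (of_real x) (of_real y) = of_real (eval3 P z x y)"
proof -
  have inner: "poly (map_poly of_real c) (of_real x) = complex_of_real (poly c x)" for c
    using of_real_poly_map_poly[of "\<lambda>c. c" c x, where 'a = complex] by simp
  have "(\<lambda>q. poly (map_poly (\<lambda>c. complex_of_real (poly c x)) q) (of_real z)) =
      (\<lambda>q. of_real (poly (map_poly (\<lambda>c. poly c x) q) z))"
    by (simp add: of_real_poly_map_poly)
  then show ?thesis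
    by (simp add: eval3_complex_def eval3_def inner of_real_poly_map_poly)
qed

lemma poly_map_poly_eq_sum:
  fixes f :: "'a::zero \<Rightarrow> 'b::comm_semiring_1"
  assumes "f 0 = 0"
  shows "poly (map_poly f p) y = (\<Sum>i\<le>degree p. f (coeff p i) * y ^ i)"
proof -
  have "poly (map_poly f p) y = (\<Sum>i\<le>degree p. coeff (map_poly f p) i * y ^ i)"
    unfolding poly_altdef
    by (intro sum.mono_neutral_left) (auto simp: map_poly_degree_leq coeff_eq_0)
  then show ?thesis
    by (simp add: coeff_map_poly assms)
qed

lemma holomorphic_on_poly_map_poly:
  assumes "\<And>w. f w 0 = 0" and "\<And>c. (\<lambda>w. f w c) holomorphic_on A" and "h holomorphic_on A"
  shows "(\<lambda>w. poly (map_poly (f w) p) (h w)) holomorphic_on A"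
proof -
  have "(\<lambda>w. \<Sum>i\<le>degree p. f w (coeff p i) * h w ^ i) holomorphic_on A"
    by (intro holomorphic_intros assms)
  then show ?thesis
    using poly_map_poly_eq_sum[of "f _" p] assms(1) by simp
qed

lemma holomorphic_on_eval3_complex [holomorphic_intros]:
  assumes "a holomorphic_on A" "b holomorphic_on A" "c holomorphic_on A"
  shows "(\<lambda>w. eval3_complex P (a w) (b w) (c w)) holomorphic_on A"
  unfolding eval3_complex_def
  by (intro holomorphic_on_poly_map_poly poly_holomorphic_on assms) simp_all

lemma analytic_continuation_from_real:
  fixes F :: "complex \<Rightarrow> complex"
  assumes hol: "F holomorphic_on - T" and "finite T" and a: "complex_of_real a \<notin> T"
    and zero: "\<forall>\<^sub>F t in at a. F (of_real t) = 0" and "w \<notin> T"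
  shows "F w = 0"
proof -
  have "open (- T)"
    using \<open>finite T\<close> by (simp add: finite_imp_closed open_Compl)
  then obtain r where "r > 0" and r: "ball (of_real a) r \<subseteq> - T"
    using a openE by (metis ComplI)
  obtain d where "d > 0" and d: "\<And>t. t \<noteq> a \<Longrightarrow> dist t a < d \<Longrightarrow> F (of_real t) = 0"
    using zero by (auto simp: eventually_at)
  define U :: "complex set" where "U = of_real ` {t. t \<noteq> a \<and> dist t a < min d r}"
  show ?thesis
  proof (rule analytic_continuation[OF hol \<open>open (- T)\<close>])
    show "connected (- T)"
      using connected_open_diff_countable[of UNIV T] \<open>finite T\<close>
      by (simp add: Compl_eq_Diff_UNIV countable_finite connected_UNIV)
    show "U \<subseteq> - T"
    proof
      fix w
      assume "w \<in> U"
      then obtain t where "w = of_real t" "dist t a < r"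
        by (auto simp: U_def)
      then have "w \<in> ball (of_real a) r"
        by (simp add: dist_commute)
      with r show "w \<in> - T" by blast
    qed
    show "of_real a islimpt U"
    proof (rule islimpt_approachable[THEN iffD2], intro allI impI)
      fix e :: real
      assume "e > 0"
      define t where "t = a + min e (min d r) / 2"
      have "t \<noteq> a" "dist t a < min d r" "dist t a < e"
        using \<open>e > 0\<close> \<open>d > 0\<close> \<open>r > 0\<close> by (auto simp: t_def dist_real_def)
      then show "\<exists>x'\<in>U. x' \<noteq> of_real a \<and> dist x' (of_real a) < e"
        by (intro bexI[of _ "of_real t"]) (auto simp: U_def)
    qed
    show "F z = 0" if "z \<in> U" for z
      using that d by (auto simp: U_def)
  qed (use a \<open>w \<notin> T\<close> in auto)
qed

lemma analytic_continuation_from_real_poly: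
  fixes F :: "complex \<Rightarrow> complex"
  assumes "F holomorphic_on {w. poly P w \<noteq> 0}" and "P \<noteq> 0" and "poly P (of_real a) \<noteq> 0"
    and "\<forall>\<^sub>F t in at a. F (of_real t) = 0" and "poly P w \<noteq> 0"
  shows "F w = 0"
  using analytic_continuation_from_real[of F "{w. poly P w = 0}" a w] assms poly_roots_finite[OF assms(2)]
  by (simp add: Collect_neg_eq)

text \<open>u \<mapsto> (rcos u, rsin u) is the rational parametrisation of the unit circle.\<close>

definition rsin :: "'a::field \<Rightarrow> 'a" where "rsin u = 2 * u / (1 + u^2)"

definition rcos :: "'a::field \<Rightarrow> 'a" where "rcos u = (1 - u^2) / (1 + u^2)"

lemma of_real_rsin [simp]: "of_real (rsin u) = (rsin (of_real u) :: 'a::real_field)"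
  and of_real_rcos [simp]: "of_real (rcos u) = (rcos (of_real u) :: 'a::real_field)"
  and of_real_Gform [simp]: "of_real (Gform s t) = (Gform (of_real s) (of_real t) :: 'a::real_field)"
  by (simp_all add: rsin_def rcos_def Gform_def)

lemma rsin_inverse: "u \<noteq> 0 \<Longrightarrow> rsin (1 / u) = rsin (u::real)"
  unfolding rsin_def power_one_over
  by (simp add: divide_simps) (simp add: power2_eq_square algebra_simps)

lemma rcos_inverse: "u \<noteq> 0 \<Longrightarrow> rcos (1 / u) = - rcos (u::real)"
  unfolding rcos_def power_one_over by (simp add: divide_simps)

lemma rsin_pos: "0 < u \<Longrightarrow> 0 < rsin (u::real)"
  by (simp add: rsin_def add_pos_nonneg)

lemma rcos_pos: "0 \<le> u \<Longrightarrow> u < 1 \<Longrightarrow> 0 < rcos (u::real)"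
  by (simp add: rcos_def add_pos_nonneg power_less_one_iff abs_square_less_1)

lemma rcos_lt_1: "0 < u \<Longrightarrow> rcos (u::real) < 1"
  by (simp add: rcos_def add_pos_nonneg)

lemma sqrt_one_minus_rsin_sq:
  assumes "0 \<le> u" "u \<le> (1::real)"
  shows "sqrt (1 - rsin u ^ 2) = rcos u"
proof (rule real_sqrt_unique)
  have "1 + u^2 \<noteq> 0"
    by (simp add: add_nonneg_eq_0_iff)
  then show "rcos u ^ 2 = 1 - rsin u ^ 2"
    by (simp add: rcos_def rsin_def field_simps) algebra
  show "0 \<le> rcos u"
    using assms by (simp add: rcos_def power_le_one)
qed

lemma rcos_add:
  assumes "1 + a^2 \<noteq> 0" "1 + b^2 \<noteq> 0"
  shows "rcos a + rcos b = 2 * (1 - a^2 * b^2) / ((1 + a^2) * (1 + b^2))"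
  using assms by (simp add: rcos_def field_simps)

lemma isCont_rsin: "isCont rsin (u::real)"
proof -
  have "isCont (\<lambda>u. 2 * u / (1 + u^2)) u"
    by (intro continuous_intros) (simp add: add_nonneg_eq_0_iff)
  then show ?thesis
    by (simp add: rsin_def [abs_def])
qed

lemma holomorphic_on_rsin [holomorphic_intros]:
  "f holomorphic_on A \<Longrightarrow> (\<And>w. w \<in> A \<Longrightarrow> 1 + f w ^ 2 \<noteq> 0) \<Longrightarrow> (\<lambda>w. rsin (f w)) holomorphic_on A"
  unfolding rsin_def by (intro holomorphic_intros)

lemma holomorphic_on_rcos [holomorphic_intros]:
  "f holomorphic_on A \<Longrightarrow> (\<And>w. w \<in> A \<Longrightarrow> 1 + f w ^ 2 \<noteq> 0) \<Longrightarrow> (\<lambda>w. rcos (f w)) holomorphic_on A"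
  unfolding rcos_def by (intro holomorphic_intros)

lemma holomorphic_on_Gform [holomorphic_intros]:
  assumes "s holomorphic_on A" "t holomorphic_on A"
    and "\<And>w. w \<in> A \<Longrightarrow> t w \<noteq> 0" "\<And>w. w \<in> A \<Longrightarrow> s w + t w \<noteq> 0"
  shows "(\<lambda>w. Gform (s w) (t w)) holomorphic_on A"
  unfolding Gform_def using assms by (intro holomorphic_intros) auto

definition param_eval :: "real poly poly poly \<Rightarrow> real \<Rightarrow> real \<Rightarrow> real" where
  "param_eval Q u v = eval3 Q (rsin u / 2) ((rsin v / rsin u)^2) (Gform (rcos u) (rcos v))"

definition param_eval_complex :: "real poly poly poly \<Rightarrow> complex \<Rightarrow> complex \<Rightarrow> complex" where
  "param_eval_complex Q a b =
    eval3_complex Q (rsin a / 2) ((rsin b / rsin a)^2) (Gform (rcos a) (rcos b))"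

lemma param_eval_complex_of_real:
  "param_eval_complex Q (of_real u) (of_real v) = of_real (param_eval Q u v)"
  by (simp add: param_eval_complex_def param_eval_def flip: eval3_complex_of_real)

lemma holomorphic_param_eval_complex_fst:
  assumes "1 + b^2 \<noteq> 0" "1 - b^2 \<noteq> 0"
  shows "(\<lambda>a. param_eval_complex Q a b) holomorphic_on {a. a * (1 + a^2) * (1 - a^2 * b^2) \<noteq> 0}"
proof -
  have "rsin a \<noteq> 0" "1 + a^2 \<noteq> 0" "rcos a + rcos b \<noteq> 0"
    if "a * (1 + a^2) * (1 - a^2 * b^2) \<noteq> 0" for a
    using that assms rcos_add[of a b] by (auto simp: rsin_def)
  moreover have "rcos b \<noteq> 0"
    using assms by (simp add: rcos_def)
  ultimately show ?thesis
    unfolding param_eval_complex_def using assms by (intro holomorphic_intros) auto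
qed

lemma holomorphic_param_eval_complex_snd:
  assumes "a \<noteq> 0" "1 + a^2 \<noteq> 0"
  shows "(\<lambda>b. param_eval_complex Q a b) holomorphic_on {b. (1 + b^2) * (1 - b^2) * (1 - a^2 * b^2) \<noteq> 0}"
proof -
  have "rcos b \<noteq> 0" "1 + b^2 \<noteq> 0" "rcos a + rcos b \<noteq> 0"
    if "(1 + b^2) * (1 - b^2) * (1 - a^2 * b^2) \<noteq> 0" for b
    using that assms rcos_add[of a b] by (auto simp: rcos_def)
  moreover have "rsin a \<noteq> 0"
    using assms by (simp add: rsin_def)
  ultimately show ?thesis
    unfolding param_eval_complex_def using assms by (intro holomorphic_intros) auto
qed

lemma param_eval_inverse_fst:
  assumes zero: "\<forall>\<^sub>F u' in at u. param_eval Q u' v = 0"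
    and "u \<noteq> 0" "v^2 \<noteq> 1" "u^2 * v^2 \<noteq> 1" "u^2 \<noteq> v^2"
  shows "param_eval Q (1 / u) v = 0"
proof -
  define P :: "complex poly" where "P = [:0, 1:] * [:1, 0, 1:] * [:1, 0, - ((of_real v)^2):]"
  have poly_P: "poly P a = a * (1 + a^2) * (1 - a^2 * (of_real v)^2)" for a
    by (simp add: P_def algebra_simps power2_eq_square)
  have "1 + (complex_of_real v)^2 \<noteq> 0" "1 - (complex_of_real v)^2 \<noteq> 0"
    using assms(3) add_nonneg_eq_0_iff[of 1 "v^2"] of_real_eq_0_iff[of "1 + v^2"]
      of_real_eq_0_iff[of "1 - v^2"]
    by auto
  then have hol: "(\<lambda>a. param_eval_complex Q a (of_real v)) holomorphic_on {a. poly P a \<noteq> 0}"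
    unfolding poly_P by (rule holomorphic_param_eval_complex_fst)
  moreover have "u * (1 + u^2) * (1 - u^2 * v^2) \<noteq> 0" "1 / u * (1 + (1 / u)^2) * (1 - (1 / u)^2 * v^2) \<noteq> 0"
    using assms(2-5) by (auto simp: add_nonneg_eq_0_iff power_one_over eq_divide_eq)
  moreover have "poly P (of_real r) = of_real (r * (1 + r^2) * (1 - r^2 * v^2))" for r
    by (simp add: poly_P)
  ultimately have P_u: "poly P (of_real u) \<noteq> 0" "poly P (of_real (1 / u)) \<noteq> 0"
    by (metis of_real_eq_0_iff)+
  have "\<forall>\<^sub>F t in at u. param_eval_complex Q (of_real t) (of_real v) = 0"
    using zero by (simp add: param_eval_complex_of_real)
  moreover have "P \<noteq> 0"
    by (simp add: P_def)
  ultimately have "param_eval_complex Q (of_real (1 / u)) (of_real v) = 0"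
    using analytic_continuation_from_real_poly[OF hol _ P_u(1) _ P_u(2)] by blast
  then show ?thesis
    by (simp only: param_eval_complex_of_real of_real_eq_0_iff)
qed

lemma param_eval_inverse_snd:
  assumes zero: "\<forall>\<^sub>F v' in at v. param_eval Q u v' = 0"
    and "u \<noteq> 0" "v^2 \<noteq> 1" "u^2 * v^2 \<noteq> 1" "u^2 \<noteq> v^2"
  shows "param_eval Q u (1 / v) = 0"
proof -
  define P :: "complex poly" where "P = [:1, 0, 1:] * [:1, 0, -1:] * [:1, 0, - ((of_real u)^2):]"
  have poly_P: "poly P b = (1 + b^2) * (1 - b^2) * (1 - (of_real u)^2 * b^2)" for b
    by (simp add: P_def algebra_simps power2_eq_square)
  have "1 + (complex_of_real u)^2 \<noteq> 0"
    using add_nonneg_eq_0_iff[of 1 "u^2"] of_real_eq_0_iff[of "1 + u^2"] by auto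
  then have hol: "(\<lambda>b. param_eval_complex Q (of_real u) b) holomorphic_on {b. poly P b \<noteq> 0}"
    unfolding poly_P using assms(2) by (intro holomorphic_param_eval_complex_snd) simp_all
  moreover have "(1 + v^2) * (1 - v^2) * (1 - u^2 * v^2) \<noteq> 0"
    "(1 + (1 / v)^2) * (1 - (1 / v)^2) * (1 - u^2 * (1 / v)^2) \<noteq> 0"
    using assms(2-5) by (auto simp: add_nonneg_eq_0_iff power_one_over eq_divide_eq)
  moreover have "poly P (of_real r) = of_real ((1 + r^2) * (1 - r^2) * (1 - u^2 * r^2))" for r
    by (simp add: poly_P)
  ultimately have P_v: "poly P (of_real v) \<noteq> 0" "poly P (of_real (1 / v)) \<noteq> 0"
    by (metis of_real_eq_0_iff)+
  have "\<forall>\<^sub>F t in at v. param_eval_complex Q (of_real u) (of_real t) = 0"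
    using zero by (simp add: param_eval_complex_of_real)
  moreover have "P \<noteq> 0"
    by (simp add: P_def)
  ultimately have "param_eval_complex Q (of_real u) (of_real (1 / v)) = 0"
    using analytic_continuation_from_real_poly[OF hol _ P_v(1) _ P_v(2)] by blast
  then show ?thesis
    by (simp only: param_eval_complex_of_real of_real_eq_0_iff)
qed

definition param_box :: "(real \<times> real) set" where
  "param_box = {(u, v). 0 < u \<and> u < 1 \<and> 0 < v \<and> v < 1 \<and> rsin u < 1/4 \<and> (rsin v / rsin u)^2 < 1/8}"

lemma Gclosed_param:
  assumes "0 < u" "u \<le> 1" "0 \<le> v" "v \<le> 1"
  shows "Gclosed (rsin u / 2) ((rsin v / rsin u)^2) = Gform (rcos u) (rcos v)"
proof -
  have "rsin u \<noteq> 0"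
    using rsin_pos[OF assms(1)] by simp
  then have "4 * (rsin u / 2)^2 = rsin u ^ 2" "4 * (rsin v / rsin u)^2 * (rsin u / 2)^2 = rsin v ^ 2"
    by (simp_all add: field_simps)
  then show ?thesis
    using assms by (simp add: Gclosed_eq_Gform sqrt_one_minus_rsin_sq)
qed

lemma param_eval_eq_0:
  assumes "\<forall>(z, x)\<in>{(z, x). \<bar>z\<bar> < 1/8 \<and> \<bar>x\<bar> < 1/8}. eval3 Q z x (Gclosed z x) = 0"
    and "(u, v) \<in> param_box"
  shows "param_eval Q u v = 0"
proof -
  have "\<bar>rsin u / 2\<bar> < 1/8" "\<bar>(rsin v / rsin u)^2\<bar> < 1/8" "0 < u" "u < 1" "0 < v" "v < 1"
    using assms(2) rsin_pos[of u] by (auto simp: param_box_def)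
  then have "eval3 Q (rsin u / 2) ((rsin v / rsin u)^2) (Gclosed (rsin u / 2) ((rsin v / rsin u)^2)) = 0"
    using assms(1) by blast
  then show ?thesis
    using Gclosed_param[of u v] \<open>0 < u\<close> \<open>u < 1\<close> \<open>0 < v\<close> \<open>v < 1\<close> by (simp add: param_eval_def)
qed

lemma eventually_param_box:
  assumes "(u, v) \<in> param_box"
  shows "\<forall>\<^sub>F u' in at u. (u', v) \<in> param_box" "\<forall>\<^sub>F v' in at v. (u, v') \<in> param_box"
proof -
  have box: "0 < u" "u < 1" "0 < v" "v < 1" "rsin u < 1/4" "(rsin v / rsin u)^2 < 1/8"
    using assms by (auto simp: param_box_def)
  have lim_u: "(rsin \<longlongrightarrow> rsin u) (at u)" and lim_v: "(rsin \<longlongrightarrow> rsin v) (at v)"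
    using isCont_rsin by (auto simp: isCont_def)
  have "((\<lambda>u'. (rsin v / rsin u')^2) \<longlongrightarrow> (rsin v / rsin u)^2) (at u)"
    using rsin_pos[OF box(1)] by (intro tendsto_intros lim_u) simp
  then have "\<forall>\<^sub>F u' in at u. (rsin v / rsin u')^2 < 1/8"
    using box(6) by (rule order_tendstoD)
  moreover have "\<forall>\<^sub>F u' in at u. rsin u' < 1/4"
    using lim_u box(5) by (rule order_tendstoD)
  moreover have "\<forall>\<^sub>F u' in at u. 0 < u'" "\<forall>\<^sub>F u' in at u. u' < 1"
    using box(1,2) by (auto intro: order_tendstoD[OF tendsto_ident_at])
  ultimately show "\<forall>\<^sub>F u' in at u. (u', v) \<in> param_box"
    by eventually_elim (use box in \<open>simp add: param_box_def\<close>)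
  have "((\<lambda>v'. (rsin v' / rsin u)^2) \<longlongrightarrow> (rsin v / rsin u)^2) (at v)"
    using rsin_pos[OF box(1)] by (intro tendsto_intros lim_v) simp
  then have "\<forall>\<^sub>F v' in at v. (rsin v' / rsin u)^2 < 1/8"
    using box(6) by (rule order_tendstoD)
  moreover have "\<forall>\<^sub>F v' in at v. 0 < v'" "\<forall>\<^sub>F v' in at v. v' < 1"
    using box(3,4) by (auto intro: order_tendstoD[OF tendsto_ident_at])
  ultimately show "\<forall>\<^sub>F v' in at v. (u, v') \<in> param_box"
    by eventually_elim (use box in \<open>simp add: param_box_def\<close>)
qed

lemma param_box_nondegenerate:
  assumes "(u, v) \<in> param_box"
  shows "u \<noteq> 0" "v^2 \<noteq> 1" "u^2 * v^2 \<noteq> 1" "u^2 \<noteq> v^2"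
    "(1 / u)^2 * v^2 \<noteq> 1" "(1 / u)^2 \<noteq> v^2"
proof -
  have box: "0 < u" "u < 1" "0 < v" "v < 1" "(rsin v / rsin u)^2 < 1/8"
    using assms by (auto simp: param_box_def)
  then have "v^2 < 1"
    by (simp add: power_less_one_iff)
  then show "u \<noteq> 0" "v^2 \<noteq> 1"
    using box by auto
  have "u \<noteq> v"
    using box rsin_pos[of u] by auto
  then show "u^2 \<noteq> v^2"
    using box by (simp add: power2_eq_iff_nonneg)
  have "u * v < 1 * 1"
    using box by (intro mult_strict_mono) auto
  then have "(u * v)^2 < 1"
    using box by (simp add: power_less_one_iff)
  then show "u^2 * v^2 \<noteq> 1"
    by (simp add: power_mult_distrib)
  have inv: "(1 / u)^2 * u^2 = 1"
    using \<open>u \<noteq> 0\<close> by (simp add: power_one_over)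
  then show "(1 / u)^2 * v^2 \<noteq> 1"
    using \<open>u^2 \<noteq> v^2\<close> by (metis mult_left_cancel zero_neq_one mult_zero_left)
  show "(1 / u)^2 \<noteq> v^2"
    using inv \<open>u^2 * v^2 \<noteq> 1\<close> by (metis mult.commute)
qed

lemma param_eval_conjugates:
  assumes zero: "\<And>u v. (u, v) \<in> param_box \<Longrightarrow> param_eval Q u v = 0" and uv: "(u, v) \<in> param_box"
  shows "param_eval Q (1 / u) v = 0" "param_eval Q u (1 / v) = 0" "param_eval Q (1 / u) (1 / v) = 0"
proof -
  have flip_u: "param_eval Q (1 / u) v' = 0" if "(u, v') \<in> param_box" for v'
    using eventually_mono[OF eventually_param_box(1)[OF that] zero]
    by (rule param_eval_inverse_fst) (use param_box_nondegenerate[OF that] in auto)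
  then show "param_eval Q (1 / u) v = 0"
    using uv .
  show "param_eval Q u (1 / v) = 0"
    using eventually_mono[OF eventually_param_box(2)[OF uv] zero]
    by (rule param_eval_inverse_snd) (use param_box_nondegenerate[OF uv] in auto)
  show "param_eval Q (1 / u) (1 / v) = 0"
    using eventually_mono[OF eventually_param_box(2)[OF uv] flip_u]
    by (rule param_eval_inverse_snd) (use param_box_nondegenerate[OF uv] in auto)
qed

lemma param_box_covers:
  assumes "0 < z" "z < 1/8" "0 < x" "x < 1/8"
  obtains u v where "(u, v) \<in> param_box" "rsin u / 2 = z" "(rsin v / rsin u)^2 = x"
proof -
  have rsin_01: "rsin (0::real) = 0" "rsin (1::real) = 1"
    by (simp_all add: rsin_def)
  have "\<exists>u. 0 \<le> u \<and> u \<le> 1 \<and> rsin u = y" if "0 \<le> y" "y \<le> 1" for y :: real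
    by (rule IVT) (use that rsin_01 isCont_rsin in auto)
  then have IVT_rsin: "\<exists>u. 0 \<le> u \<and> u \<le> 1 \<and> rsin u = y" if "0 < y" "y < 1/4" for y :: real
    using that by simp
  have "sqrt x * z < 1 * (1/8)"
    using assms by (intro mult_strict_mono) auto
  then obtain u v where u: "0 \<le> u" "u \<le> 1" "rsin u = 2 * z"
    and v: "0 \<le> v" "v \<le> 1" "rsin v = 2 * sqrt x * z"
    using IVT_rsin[of "2 * z"] IVT_rsin[of "2 * sqrt x * z"] assms by auto
  then have "u \<noteq> 0" "u \<noteq> 1" "v \<noteq> 0" "v \<noteq> 1"
    using rsin_01 assms \<open>sqrt x * z < 1 * (1/8)\<close> by auto
  moreover have ratio: "(rsin v / rsin u)^2 = x"
    using u(3) v(3) assms by (simp add: power_divide power_mult_distrib)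
  ultimately have "(u, v) \<in> param_box"
    using u v assms by (auto simp: param_box_def)
  moreover have "rsin u / 2 = z"
    using u(3) by simp
  ultimately show ?thesis
    using that ratio by blast
qed

lemma card_Gform_conjugates:
  fixes s t :: real
  assumes "0 < s" "0 < t" "t < 1" "s \<noteq> t"
  shows "card {Gform s t, Gform (-s) t, Gform s (-t), Gform (-s) (-t)} = 4"
proof -
  define A B where "A = 2 * (1 - t) / t" and "B = 2 * (1 + t) / t"
  have "0 < A" "0 < B"
    using assms by (auto simp: A_def B_def)
  have "s + t \<noteq> 0" "t - s \<noteq> 0" "(s + t)^2 - (t - s)^2 = 4 * s * t"
    using assms by (auto simp: power2_eq_square algebra_simps)
  then have sq: "0 < (s + t)^2" "0 < (t - s)^2" "(s + t)^2 \<noteq> (t - s)^2"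
    using assms by auto
  have "(s - t)^2 = (t - s)^2" "(- s - t)^2 = (s + t)^2"
    by algebra+
  then have G: "Gform s t = A / (s + t)^2" "Gform (-s) t = A / (t - s)^2"
    "Gform s (-t) = - (B / (t - s)^2)" "Gform (-s) (-t) = - (B / (s + t)^2)"
    by (simp_all add: Gform_def A_def B_def)
  have card4: "card {a, b, - c, - d} = 4"
    if "0 < a" "0 < b" "0 < c" "0 < d" "a \<noteq> b" "c \<noteq> d" for a b c d :: real
    using that by auto
  show ?thesis
    unfolding G
  proof (rule card4)
    show "A / (s + t)^2 \<noteq> A / (t - s)^2" "B / (t - s)^2 \<noteq> B / (s + t)^2"
      using \<open>0 < A\<close> \<open>0 < B\<close> sq by (simp_all add: frac_eq_eq)
  qed (use \<open>0 < A\<close> \<open>0 < B\<close> sq in simp_all)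
qed

lemma Gclosed_conjugates_annihilated:
  assumes zero: "\<forall>(z, x)\<in>{(z, x). \<bar>z\<bar> < 1/8 \<and> \<bar>x\<bar> < 1/8}. eval3 Q z x (Gclosed z x) = 0"
    and "0 < z" "z < 1/8" "0 < x" "x < 1/8"
  obtains s t where "0 < s" "0 < t" "t < 1" "s \<noteq> t"
    and "{Gform s t, Gform (- s) t, Gform s (- t), Gform (- s) (- t)} \<subseteq> {y. eval3 Q z x y = 0}"
proof -
  have box_zero: "param_eval Q u v = 0" if "(u, v) \<in> param_box" for u v
    using param_eval_eq_0[OF zero that] .
  obtain u v where uv: "(u, v) \<in> param_box" and z: "rsin u / 2 = z" and x: "(rsin v / rsin u)^2 = x"
    using assms(2-5) by (rule param_box_covers)
  have box: "0 < u" "u < 1" "0 < v" "v < 1"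
    using uv by (auto simp: param_box_def)
  have root: "eval3 Q z x (Gform (rcos u') (rcos v')) = 0"
    if "param_eval Q u' v' = 0" "rsin u' = rsin u" "rsin v' = rsin v" for u' v'
    using that z x by (simp add: param_eval_def)
  have inverse: "rsin (1 / u) = rsin u" "rcos (1 / u) = - rcos u"
    "rsin (1 / v) = rsin v" "rcos (1 / v) = - rcos v"
    using box by (simp_all add: rsin_inverse rcos_inverse)
  have "{Gform (rcos u) (rcos v), Gform (- rcos u) (rcos v), Gform (rcos u) (- rcos v),
      Gform (- rcos u) (- rcos v)} \<subseteq> {y. eval3 Q z x y = 0}"
    using root[OF box_zero[OF uv]] root[OF param_eval_conjugates(1)[OF box_zero uv]]
      root[OF param_eval_conjugates(2)[OF box_zero uv]]
      root[OF param_eval_conjugates(3)[OF box_zero uv]]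
    by (simp add: inverse)
  moreover have "rcos u \<noteq> rcos v"
  proof
    assume "rcos u = rcos v"
    then have "sqrt (1 - rsin u ^ 2) = sqrt (1 - rsin v ^ 2)"
      using sqrt_one_minus_rsin_sq[of u] sqrt_one_minus_rsin_sq[of v] box by simp
    then have "rsin u ^ 2 = rsin v ^ 2"
      by simp
    then show False
      using x assms(4,5) rsin_pos[OF box(1)] by (auto simp: power_divide split: if_splits)
  qed
  ultimately show ?thesis
    using that[of "rcos u" "rcos v"] rcos_pos[of u] rcos_pos[of v] rcos_lt_1[of v] box by simp
qed

lemma specialization_eq_0_if_degree_lt_4:
  assumes zero: "\<forall>(z, x)\<in>{(z, x). \<bar>z\<bar> < 1/8 \<and> \<bar>x\<bar> < 1/8}. eval3 Q z x (Gclosed z x) = 0"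
    and "degree Q < 4" "0 < z" "z < 1/8" "0 < x" "x < 1/8"
  shows "map_poly (\<lambda>q. eval2 q z x) Q = 0"
proof (rule ccontr)
  define p where "p = map_poly (\<lambda>q. eval2 q z x) Q"
  assume "map_poly (\<lambda>q. eval2 q z x) Q \<noteq> 0"
  then have "p \<noteq> 0"
    by (simp add: p_def)
  have "{y. eval3 Q z x y = 0} = {y. poly p y = 0}"
    by (simp add: eval3_eq_poly p_def)
  then obtain s t where "0 < s" "0 < t" "t < 1" "s \<noteq> t"
    and roots: "{Gform s t, Gform (- s) t, Gform s (- t), Gform (- s) (- t)} \<subseteq> {y. poly p y = 0}"
    using Gclosed_conjugates_annihilated[OF zero assms(3-6)] by metis
  have "4 = card {Gform s t, Gform (- s) t, Gform s (- t), Gform (- s) (- t)}"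
    using card_Gform_conjugates[OF \<open>0 < s\<close> \<open>0 < t\<close> \<open>t < 1\<close> \<open>s \<noteq> t\<close>] by simp
  also have "\<dots> \<le> card {y. poly p y = 0}"
    by (rule card_mono[OF poly_roots_finite[OF \<open>p \<noteq> 0\<close>] roots])
  also have "\<dots> \<le> degree p"
    by (rule card_poly_roots_bound[OF \<open>p \<noteq> 0\<close>])
  also have "\<dots> \<le> degree Q"
    unfolding p_def by (rule map_poly_degree_leq)
  finally show False
    using assms(2) by simp
qed

lemma degree_annihilator_Gclosed:
  assumes "Q \<noteq> 0"
    and zero: "\<forall>(z, x)\<in>{(z, x). \<bar>z\<bar> < 1/8 \<and> \<bar>x\<bar> < 1/8}. eval3 Q z x (Gclosed z x) = 0"
  shows "4 \<le> degree Q"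
proof (rule ccontr)
  assume "\<not> 4 \<le> degree Q"
  have "coeff Q i = 0" for i
  proof (rule eval2_eq_0_on_product)
    fix z x :: real
    assume "z \<in> {0<..<1/8}" "x \<in> {0<..<1/8}"
    then have "map_poly (\<lambda>q. eval2 q z x) Q = 0"
      using \<open>\<not> 4 \<le> degree Q\<close> by (intro specialization_eq_0_if_degree_lt_4[OF zero]) auto
    then have "coeff (map_poly (\<lambda>q. eval2 q z x) Q) i = 0"
      by simp
    then show "eval2 (coeff Q i) z x = 0"
      by (simp add: coeff_map_poly)
  qed simp_all
  then show False
    using \<open>Q \<noteq> 0\<close> by (simp add: poly_eq_iff)
qed

lemma Gclosed_algebraic_of_degree_4:
  "algebraic_of_degree 4 Gclosed {(z, x). \<bar>z\<bar> < 1/8 \<and> \<bar>x\<bar> < 1/8}"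
  unfolding algebraic_of_degree_def
proof (intro conjI allI impI notI)
  have "4 * z^2 < 1 \<and> 4 * x * z^2 < 1" if "\<bar>z\<bar> < 1/8" "\<bar>x\<bar> < 1/8" for z x :: real
  proof -
    have "\<bar>z\<bar>^2 < (1/8)^2"
      using that by (intro power_strict_mono) auto
    then have "z^2 < 1/64"
      by (simp add: power2_eq_square)
    moreover have "x * z^2 \<le> 1 * z^2"
      using that by (intro mult_right_mono) auto
    ultimately show ?thesis
      by simp
  qed
  then show "\<exists>P. P \<noteq> 0 \<and> degree P = 4 \<and>
      (\<forall>(z, x)\<in>{(z, x). \<bar>z\<bar> < 1/8 \<and> \<bar>x\<bar> < 1/8}. eval3 P z x (Gclosed z x) = 0)"
    using degree_minpoly_G minpoly_G_root by (intro exI[of _ minpoly_G]) (auto simp: Gclosed_eq_Gform)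
next
  fix Q :: "real poly poly poly"
  assume "Q \<noteq> 0 \<and> degree Q < 4"
    and "\<forall>(z, x)\<in>{(z, x). \<bar>z\<bar> < 1/8 \<and> \<bar>x\<bar> < 1/8}. eval3 Q z x (Gclosed z x) = 0"
  then have "4 \<le> degree Q" "degree Q < 4"
    using degree_annihilator_Gclosed by blast+
  then show False
    by simp
qed

theorem proposition15:
  "\<exists>r>0.
     (\<forall>z x. \<bar>z\<bar> < r \<and> \<bar>x\<bar> < r \<longrightarrow>
        ((\<lambda>(n, m). real (g n m) * z ^ n * x ^ m) has_sum Gclosed z x) UNIV) \<and>
     algebraic_of_degree 4 Gclosed {(z, x). \<bar>z\<bar> < r \<and> \<bar>x\<bar> < r}"
proof (intro exI[of _ "1/8"] conjI allI impI)
  show "(0::real) < 1/8"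
    by simp
next
  fix z x :: real
  assume "\<bar>z\<bar> < 1/8 \<and> \<bar>x\<bar> < 1/8"
  then show "((\<lambda>(n, m). real (g n m) * z ^ n * x ^ m) has_sum Gclosed z x) UNIV"
    using has_sum_g by blast
next
  show "algebraic_of_degree 4 Gclosed {(z, x). \<bar>z\<bar> < 1/8 \<and> \<bar>x\<bar> < 1/8}"
    by (rule Gclosed_algebraic_of_degree_4)
qed

end
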